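(* Let $\delta\in(0,1)$, $\epsilon\in\mathbb{R}$, $\sigma>0$, and let $R:\mathcal{S}\times\mathcal{W}\to\mathbb{R}^+$, $(s,w)\mapsto R_{s,w}$, satisfy $R_{\max}:=\sup_{s,w}R_{s,w}<\infty$. Suppose the learning algorithm $\mathcal{A}$ is $(R_{S,W},\epsilon,\delta;d_m)$-compressible, and that for every $w\in\mathcal{W}$ the random variable $\ell(Z,w)$, $Z\sim\mu$, is $\sigma$-subgaussian. Then, with probability at least $1-\delta$ over $(S,W)\sim P_{S,W}$, $$\mathrm{gen}(S,W)\le \sqrt{\frac{4\sigma^2\big(R_{S,W}+\log(\sqrt{2n}/\delta)\big)}{2n-1}+\epsilon}.$$
   Context: Setup: $\mathcal{Z}$ is a data space, $\mathcal{W}$ a hypothesis space, $\ell:\mathcal{Z}\times\mathcal{W}\to\mathbb{R}^+$ a loss, $\mu$ an unknown distribution on $\mathcal{Z}$, and $S=(Z_1,\dots,Z_n)\sim P_S=\mu^{\otimes n}$ a training set in $\mathcal{S}=\mathcal{Z}^n$. A (possibly stochastic) algorithm $\mathcal{A}$ outputs $W=\mathcal{A}(S)\in\mathcal{W}$, inducing a conditional $P_{W|S}$ and joint $P_{S,W}$. Population risk $\mathcal{L}(w)=\mathbb{E}_{Z\sim\mu}[\ell(Z,w)]$, empirical risk $\hat{\mathcal{L}}(s,w)=\frac1n\sum_{i=1}^n\ell(z_i,w)$, generalization error $\mathrm{gen}(s,w)=\mathcal{L}(w)-\hat{\mathcal{L}}(s,w)$. All logarithms are natural. A real random variable $X$ is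 $\sigma$-subgaussian if $\log\mathbb{E}[e^{\lambda(X-\mathbb{E}X)}]\le\lambda^2\sigma^2/2$ for all $\lambda\in\mathbb{R}$. Fix a set $\hat{\mathcal{W}}\subseteq\mathcal{W}$. Distortion: $d(w,\hat w;s)=\mathrm{gen}(s,w)^2-\mathrm{gen}(s,\hat w)^2$, and for $s^m=(s_1,\dots,s_m)$, $w^m$, $\hat w^m$, $d_m(w^m,\hat w^m;s^m)=\frac1m\sum_{i=1}^m d(w_i,\hat w_i;s_i)$. $\mathbb{P}_{(S,W)^{\otimes m}}$ denotes probability when $(S_i,W_i)$, $i\in[m]$, are i.i.d. $\sim P_{S,W}$. Variable-size compressibility: $\mathcal{A}$ is $(R_{S,W},\epsilon,\delta;d_m)$-compressible (for $R$ as in the claim, $\epsilon\in\mathbb{R}$, $\delta>0$) if there exists a sequence of hypothesis books $\mathcal{H}_m=\{\hat{\mathbf{w}}[j]: j\in[\lfloor e^{mR_{\max}}\rfloor]\}\subseteq\hat{\mathcal{W}}^m$, $m\in\mathbb{N}$, such that $$\liminf_{m\to\infty}\Big[-\frac1m\log\mathbb{P}_{(S,W)^{\otimes m}}\Big(\min_{j\le e^{\sum_{i=1}^m R_{S_i,W_i}}} d_m(W^m,\hat{\mathbf{w}}[j];S^m)>\epsilon\Big)\Big]\ge\log(1/\delta).$$ *)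

theory Defs
  imports "HOL-Probability.Probability"
begin

text \<open>Training sets s are functions nat => 'z (only indices < n matter), hypotheses have type 'w.\<close>

definition subgaussian :: "'a measure \<Rightarrow> ('a \<Rightarrow> real) \<Rightarrow> real \<Rightarrow> bool" where
  "subgaussian M X \<sigma> \<longleftrightarrow> integrable M X \<and>
     (\<forall>l::real. integrable M (\<lambda>x. exp (l * (X x - (\<integral>y. X y \<partial>M)))) \<and>
        ln (\<integral>x. exp (l * (X x - (\<integral>y. X y \<partial>M))) \<partial>M) \<le> l\<^sup>2 * \<sigma>\<^sup>2 / 2)"

definition pop_risk :: "'z measure \<Rightarrow> ('z \<Rightarrow> 'w \<Rightarrow> real) \<Rightarrow> 'w \<Rightarrow> real" where
  "pop_risk \<mu> loss w = (\<integral>z. loss z w \<partial>\<mu>)"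

definition emp_risk :: "nat \<Rightarrow> ('z \<Rightarrow> 'w \<Rightarrow> real) \<Rightarrow> (nat \<Rightarrow> 'z) \<Rightarrow> 'w \<Rightarrow> real" where
  "emp_risk n loss s w = (\<Sum>i<n. loss (s i) w) / real n"

definition gen :: "'z measure \<Rightarrow> nat \<Rightarrow> ('z \<Rightarrow> 'w \<Rightarrow> real) \<Rightarrow> (nat \<Rightarrow> 'z) \<Rightarrow> 'w \<Rightarrow> real" where
  "gen \<mu> n loss s w = pop_risk \<mu> loss w - emp_risk n loss s w"

definition distortion :: "'z measure \<Rightarrow> nat \<Rightarrow> ('z \<Rightarrow> 'w \<Rightarrow> real) \<Rightarrow> 'w \<Rightarrow> 'w \<Rightarrow> (nat \<Rightarrow> 'z) \<Rightarrow> real" where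
  "distortion \<mu> n loss w wh s = (gen \<mu> n loss s w)\<^sup>2 - (gen \<mu> n loss s wh)\<^sup>2"

definition distortion_m :: "'z measure \<Rightarrow> nat \<Rightarrow> ('z \<Rightarrow> 'w \<Rightarrow> real) \<Rightarrow> nat \<Rightarrow>
    (nat \<Rightarrow> 'w) \<Rightarrow> (nat \<Rightarrow> 'w) \<Rightarrow> (nat \<Rightarrow> (nat \<Rightarrow> 'z)) \<Rightarrow> real" where
  "distortion_m \<mu> n loss m ws whs ss = (\<Sum>i<m. distortion \<mu> n loss (ws i) (whs i) (ss i)) / real m"

definition neg_log_rate :: "nat \<Rightarrow> real \<Rightarrow> ereal" where
  "neg_log_rate m p = (if p = 0 then \<infinity> else ereal (- ln p / real m))"

definition Rmax :: "('s \<times> 'w) measure \<Rightarrow> ('s \<times> 'w \<Rightarrow> real) \<Rightarrow> real" where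
  "Rmax PSW R = (SUP x\<in>space PSW. R x)"

text \<open>Variable-size compressibility. book m j is the j-th hypothesis vector of the m-th book
  (coordinates i < m), for j in [floor(exp(m Rmax))].\<close>
definition compressible ::
  "'z measure \<Rightarrow> nat \<Rightarrow> ('z \<Rightarrow> 'w \<Rightarrow> real) \<Rightarrow> ((nat \<Rightarrow> 'z) \<times> 'w) measure \<Rightarrow> 'w set \<Rightarrow>
   ((nat \<Rightarrow> 'z) \<times> 'w \<Rightarrow> real) \<Rightarrow> real \<Rightarrow> real \<Rightarrow> bool" where
  "compressible \<mu> n loss PSW What R \<epsilon> \<delta> \<longleftrightarrow>
    (\<exists>book :: nat \<Rightarrow> nat \<Rightarrow> nat \<Rightarrow> 'w.
      (\<forall>m j i. 1 \<le> j \<and> j \<le> nat \<lfloor>exp (real m * Rmax PSW R)\<rfloor> \<and> i < m \<longrightarrow> book m j i \<in> What) \<and>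
      liminf (\<lambda>m. neg_log_rate m
        (measure (PiM {..<m} (\<lambda>_. PSW))
          {x \<in> space (PiM {..<m} (\<lambda>_. PSW)).
             \<forall>j \<in> {1..nat \<lfloor>exp (real m * Rmax PSW R)\<rfloor>}.
               real j \<le> exp (\<Sum>i<m. R (x i)) \<longrightarrow>
               distortion_m \<mu> n loss m (\<lambda>i. snd (x i)) (book m j) (\<lambda>i. fst (x i)) > \<epsilon>}))
       \<ge> ereal (ln (1 / \<delta>)))"

end

theory Submission
  imports Defs "HOL-Real_Asymp.Real_Asymp"
begin

text \<open>For a fixed hypothesis \<open>w\<close>, \<open>gen(S, w)\<close> is \<open>\<sigma>/sqrt n\<close>-subgaussian, so with
  \<open>\<lambda> = (2n - 1)/(4\<sigma>\<^sup>2)\<close> one has \<open>E exp (\<lambda> gen(S, w)\<^sup>2) \<le> sqrt (2n)\<close>.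
  Let \<open>p\<close> be the probability that \<open>gen(S, W)\<^sup>2\<close> exceeds the squared bound and take \<open>m\<close> i.i.d.\ copies
  of \<open>(S, W)\<close>. Outside the compressibility failure event some codeword \<open>j \<le> exp (\<Sum>\<^sub>i R(S\<^sub>i, W\<^sub>i))\<close>
  has distortion at most \<open>\<epsilon>\<close>; if all copies exceed the bound, this forces
  \<open>\<lambda> \<Sum>\<^sub>i gen(S\<^sub>i, w\<^sub>j\<^sub>i)\<^sup>2 \<ge> ln j + m ln (sqrt (2n)/\<delta>)\<close>, an event of probability at most
  \<open>\<delta>\<^sup>m/j\<close> by Markov's inequality. Summing over \<open>j \<le> exp (m Rmax)\<close> gives
  \<open>p\<^sup>m \<le> P(failure) + \<delta>\<^sup>m (1 + m Rmax)\<close>, and since compressibility makes \<open>P(failure) \<le> (\<delta> q)\<^sup>m\<close>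
  eventually, for every \<open>q > 1\<close>, this forces \<open>p \<le> \<delta>\<close>.\<close>

lemma nn_integral_normal_density:
  "s > 0 \<Longrightarrow> (\<integral>\<^sup>+x. ennreal (normal_density m s x) \<partial>lborel) = 1"
  by (subst nn_integral_eq_integral)
     (auto simp: normal_density_nonneg integrable_normal_density integral_normal_density)

lemma nn_integral_exp_mult_std_normal_density:
  "(\<integral>\<^sup>+x. ennreal (exp (b * x) * std_normal_density x) \<partial>lborel) = ennreal (exp (b\<^sup>2 / 2))"
proof -
  have shift: "exp (b * x) * std_normal_density x = exp (b\<^sup>2 / 2) * normal_density b 1 x" for x
  proof -
    have "b * x + - x\<^sup>2 / 2 = b\<^sup>2 / 2 + - (x - b)\<^sup>2 / 2"
      by (simp add: power2_eq_square field_simps)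
    then have "exp (b * x) * exp (- x\<^sup>2 / 2) = exp (b\<^sup>2 / 2) * exp (- (x - b)\<^sup>2 / 2)"
      by (simp only: mult_exp_exp)
    then show ?thesis unfolding std_normal_density_def normal_density_def by simp
  qed
  have "(\<integral>\<^sup>+x. ennreal (exp (b * x) * std_normal_density x) \<partial>lborel)
      = (\<integral>\<^sup>+x. ennreal (exp (b\<^sup>2 / 2)) * ennreal (normal_density b 1 x) \<partial>lborel)"
    by (simp add: shift ennreal_mult)
  also have "\<dots> = ennreal (exp (b\<^sup>2 / 2))"
    by (subst nn_integral_cmult) (auto simp: nn_integral_normal_density)
  finally show ?thesis .
qed

lemma nn_integral_std_normal_density_exp_sq:
  assumes "0 \<le> k" "k < 1 / 2"
  shows "(\<integral>\<^sup>+x. ennreal (std_normal_density x * exp (k * x\<^sup>2)) \<partial>lborel) = ennreal (1 / sqrt (1 - 2 * k))"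
proof -
  define s where "s = 1 / sqrt (1 - 2 * k)"
  have pos: "1 - 2 * k > 0" using assms by simp
  have s_pos: "s > 0" using pos by (simp add: s_def)
  have s_sq: "s\<^sup>2 = 1 / (1 - 2 * k)" using pos by (simp add: s_def power_divide)
  have rescale: "std_normal_density x * exp (k * x\<^sup>2) = s * normal_density 0 s x" for x
  proof -
    have e: "exp (- x\<^sup>2 / 2) * exp (k * x\<^sup>2) = exp (- (x - 0)\<^sup>2 / (2 * s\<^sup>2))"
      unfolding mult_exp_exp s_sq using pos by (simp add: field_simps)
    have c: "1 / sqrt (2 * pi) = s * (1 / sqrt (2 * pi * s\<^sup>2))"
      using pos by (simp add: s_def real_sqrt_mult real_sqrt_divide field_simps)
    have "std_normal_density x * exp (k * x\<^sup>2) = 1 / sqrt (2 * pi) * (exp (- x\<^sup>2 / 2) * exp (k * x\<^sup>2))"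
      unfolding std_normal_density_def by (simp only: mult.assoc)
    also have "\<dots> = s * (1 / sqrt (2 * pi * s\<^sup>2) * exp (- (x - 0)\<^sup>2 / (2 * s\<^sup>2)))"
      unfolding e c by (simp only: mult.assoc)
    finally show ?thesis unfolding normal_density_def .
  qed
  have "(\<integral>\<^sup>+x. ennreal (std_normal_density x * exp (k * x\<^sup>2)) \<partial>lborel)
      = (\<integral>\<^sup>+x. ennreal s * ennreal (normal_density 0 s x) \<partial>lborel)"
    using s_pos by (intro nn_integral_cong) (simp add: rescale ennreal_mult)
  also have "\<dots> = ennreal s"
    using s_pos by (subst nn_integral_cmult) (auto simp: nn_integral_normal_density)
  finally show ?thesis by (simp add: s_def)
qed

text \<open>Gaussian linearisation: \<open>exp (\<lambda> X\<^sup>2) = E\<^sub>g exp (sqrt (2\<lambda>) X g)\<close> for a standard Gaussian \<open>g\<close>,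
  then Fubini and the moment generating bound for \<open>X\<close>.\<close>

lemma nn_integral_exp_sq_le_of_mgf:
  fixes X :: "'a \<Rightarrow> real"
  assumes M: "prob_space M" and [measurable]: "X \<in> borel_measurable M"
    and mgf: "\<And>t. (\<integral>\<^sup>+x. ennreal (exp (t * X x)) \<partial>M) \<le> ennreal (exp (t\<^sup>2 * v / 2))"
    and "l \<ge> 0" "v \<ge> 0" "l * v < 1 / 2"
  shows "(\<integral>\<^sup>+x. ennreal (exp (l * (X x)\<^sup>2)) \<partial>M) \<le> ennreal (1 / sqrt (1 - 2 * (l * v)))"
proof -
  interpret M: prob_space M by fact
  interpret pair_sigma_finite M lborel
    by (intro pair_sigma_finite.intro M.sigma_finite_measure_axioms lborel.sigma_finite_measure_axioms)
  define a where "a = sqrt (2 * l)"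
  have a_sq: "a\<^sup>2 = 2 * l" using \<open>l \<ge> 0\<close> by (simp add: a_def)
  have linearise: "ennreal (exp (l * (X x)\<^sup>2))
      = (\<integral>\<^sup>+g. ennreal (exp ((a * X x) * g) * std_normal_density g) \<partial>lborel)" for x
    unfolding nn_integral_exp_mult_std_normal_density by (simp add: power_mult_distrib a_sq)
  have "(\<integral>\<^sup>+x. ennreal (exp (l * (X x)\<^sup>2)) \<partial>M)
      = (\<integral>\<^sup>+x. (\<integral>\<^sup>+g. ennreal (exp ((a * X x) * g) * std_normal_density g) \<partial>lborel) \<partial>M)"
    by (simp add: linearise)
  also have "\<dots> = (\<integral>\<^sup>+g. (\<integral>\<^sup>+x. ennreal (exp ((a * X x) * g) * std_normal_density g) \<partial>M) \<partial>lborel)"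
    by (rule Fubini'[symmetric]) measurable
  also have "\<dots> = (\<integral>\<^sup>+g. (\<integral>\<^sup>+x. ennreal (exp ((a * g) * X x)) \<partial>M) * ennreal (std_normal_density g) \<partial>lborel)"
    by (intro nn_integral_cong, subst nn_integral_multc[symmetric])
       (auto simp: ennreal_mult mult_ac intro!: nn_integral_cong)
  also have "\<dots> \<le> (\<integral>\<^sup>+g. ennreal (exp ((a * g)\<^sup>2 * v / 2)) * ennreal (std_normal_density g) \<partial>lborel)"
    by (intro nn_integral_mono mult_right_mono mgf) auto
  also have "\<dots> = (\<integral>\<^sup>+g. ennreal (std_normal_density g * exp ((l * v) * g\<^sup>2)) \<partial>lborel)"
    by (intro nn_integral_cong) (simp add: ennreal_mult[symmetric] power_mult_distrib a_sq mult_ac)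
  also have "\<dots> = ennreal (1 / sqrt (1 - 2 * (l * v)))"
    by (rule nn_integral_std_normal_density_exp_sq) (use assms in auto)
  finally show ?thesis .
qed

lemma subgaussian_nn_integral_exp_le:
  assumes "prob_space M" and "subgaussian M f \<sigma>"
  shows "(\<integral>\<^sup>+x. ennreal (exp (l * (f x - (\<integral>y. f y \<partial>M)))) \<partial>M) \<le> ennreal (exp (l\<^sup>2 * \<sigma>\<^sup>2 / 2))"
proof -
  interpret prob_space M by fact
  let ?g = "\<lambda>x. exp (l * (f x - (\<integral>y. f y \<partial>M)))"
  have int: "integrable M ?g" and ln_le: "ln (\<integral>x. ?g x \<partial>M) \<le> l\<^sup>2 * \<sigma>\<^sup>2 / 2"
    using \<open>subgaussian M f \<sigma>\<close> unfolding subgaussian_def by auto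
  have "(\<integral>\<^sup>+x. ennreal (?g x) \<partial>M) = ennreal (\<integral>x. ?g x \<partial>M)"
    by (rule nn_integral_eq_integral) (use int in auto)
  also have "(\<integral>x. ?g x \<partial>M) \<le> exp (l\<^sup>2 * \<sigma>\<^sup>2 / 2)"
  proof (cases "(\<integral>x. ?g x \<partial>M) > 0")
    case True
    then show ?thesis using ln_le by (metis exp_le_cancel_iff exp_ln)
  qed (smt (verit) exp_gt_zero)
  finally show ?thesis by (simp add: ennreal_leI)
qed

lemma nn_integral_exp_gen_le:
  fixes \<mu> :: "'z measure" and loss :: "'z \<Rightarrow> 'w \<Rightarrow> real"
  assumes "prob_space \<mu>" and n: "n \<ge> 1"
    and [measurable]: "(\<lambda>z. loss z w) \<in> borel_measurable \<mu>"
    and sg: "subgaussian \<mu> (\<lambda>z. loss z w) \<sigma>"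
  shows "(\<integral>\<^sup>+s. ennreal (exp (t * gen \<mu> n loss s w)) \<partial>PiM {..<n} (\<lambda>_. \<mu>))
          \<le> ennreal (exp (t\<^sup>2 * (\<sigma>\<^sup>2 / real n) / 2))"
proof -
  interpret prob_space \<mu> by fact
  interpret product_sigma_finite "\<lambda>_::nat. \<mu>"
    by (simp add: product_sigma_finite_def sigma_finite_measure_axioms)
  define L where "L = (\<integral>z. loss z w \<partial>\<mu>)"
  define l where "l = - t / real n"
  have gen_eq: "t * gen \<mu> n loss s w = (\<Sum>i<n. l * (loss (s i) w - L))" for s
  proof -
    have "(\<Sum>i<n. l * (loss (s i) w - L)) = l * (\<Sum>i<n. loss (s i) w) - l * real n * L"
      by (simp add: sum_distrib_left[symmetric] sum_subtractf algebra_simps)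
    then show ?thesis using n
      by (simp add: gen_def pop_risk_def emp_risk_def L_def l_def field_simps)
  qed
  have "(\<integral>\<^sup>+s. ennreal (exp (t * gen \<mu> n loss s w)) \<partial>PiM {..<n} (\<lambda>_. \<mu>))
      = (\<integral>\<^sup>+s. (\<Prod>i<n. ennreal (exp (l * (loss (s i) w - L)))) \<partial>PiM {..<n} (\<lambda>_. \<mu>))"
    by (simp add: gen_eq exp_sum prod_ennreal)
  also have "\<dots> = (\<Prod>i<n. (\<integral>\<^sup>+z. ennreal (exp (l * (loss z w - L))) \<partial>\<mu>))"
    by (rule product_nn_integral_prod) auto
  also have "\<dots> \<le> (\<Prod>i<n. ennreal (exp (l\<^sup>2 * \<sigma>\<^sup>2 / 2)))"
    unfolding prod_constant
    by (intro power_mono subgaussian_nn_integral_exp_le[OF assms(1) sg, folded L_def]) auto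
  also have "\<dots> = ennreal (exp (real n * (l\<^sup>2 * \<sigma>\<^sup>2 / 2)))"
    using exp_of_nat_mult[of n "l\<^sup>2 * \<sigma>\<^sup>2 / 2"] by (simp add: ennreal_power)
  also have "real n * (l\<^sup>2 * \<sigma>\<^sup>2 / 2) = t\<^sup>2 * (\<sigma>\<^sup>2 / real n) / 2"
    using n by (simp add: l_def power2_eq_square field_simps)
  finally show ?thesis .
qed

lemma nn_integral_exp_gen_sq_le:
  fixes \<mu> :: "'z measure" and loss :: "'z \<Rightarrow> 'w \<Rightarrow> real"
  assumes "prob_space \<mu>" and n: "n \<ge> 1" and \<sigma>: "\<sigma> > 0"
    and [measurable]: "(\<lambda>z. loss z w) \<in> borel_measurable \<mu>"
    and "subgaussian \<mu> (\<lambda>z. loss z w) \<sigma>"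
  shows "(\<integral>\<^sup>+s. ennreal (exp ((2 * real n - 1) / (4 * \<sigma>\<^sup>2) * (gen \<mu> n loss s w)\<^sup>2)) \<partial>PiM {..<n} (\<lambda>_. \<mu>))
          \<le> ennreal (sqrt (2 * real n))"
proof -
  have P: "prob_space (PiM {..<n} (\<lambda>_. \<mu>))" by (rule prob_space_PiM) (rule assms(1))
  have gen_meas: "(\<lambda>s. gen \<mu> n loss s w) \<in> borel_measurable (PiM {..<n} (\<lambda>_. \<mu>))"
    unfolding gen_def emp_risk_def by measurable
  have kv: "(2 * real n - 1) / (4 * \<sigma>\<^sup>2) * (\<sigma>\<^sup>2 / real n) = (2 * real n - 1) / (4 * real n)"
    using n \<sigma> by (simp add: field_simps)
  have "1 - 2 * ((2 * real n - 1) / (4 * real n)) = 1 / (2 * real n)"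
    using n by (simp add: field_simps)
  then have "sqrt (2 * real n) = 1 / sqrt (1 - 2 * ((2 * real n - 1) / (4 * \<sigma>\<^sup>2) * (\<sigma>\<^sup>2 / real n)))"
    unfolding kv by (simp add: real_sqrt_divide)
  also have "ennreal \<dots> \<ge> (\<integral>\<^sup>+s. ennreal (exp ((2 * real n - 1) / (4 * \<sigma>\<^sup>2) * (gen \<mu> n loss s w)\<^sup>2)) \<partial>PiM {..<n} (\<lambda>_. \<mu>))"
    by (rule nn_integral_exp_sq_le_of_mgf[OF P gen_meas nn_integral_exp_gen_le[of \<mu> n loss w \<sigma>, OF assms(1,2,4,5)]])
       (use n \<sigma> kv in auto)
  finally show ?thesis .
qed

lemma measure_PiM_exp_sum_ge_le:
  assumes "prob_space M" "T > 0" "c \<ge> 0"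
    and meas: "\<And>i. i < m \<Longrightarrow> f i \<in> borel_measurable M"
    and bound: "\<And>i. i < m \<Longrightarrow> (\<integral>\<^sup>+x. ennreal (exp (f i x)) \<partial>M) \<le> ennreal c"
  shows "measure (PiM {..<m} (\<lambda>_. M)) {x \<in> space (PiM {..<m} (\<lambda>_. M)). T \<le> exp (\<Sum>i<m. f i (x i))}
           \<le> c ^ m / T"
proof -
  interpret M: prob_space M by fact
  interpret P: prob_space "PiM {..<m} (\<lambda>_. M)" by (rule prob_space_PiM) (rule assms(1))
  interpret product_sigma_finite "\<lambda>_::nat. M"
    by (simp add: product_sigma_finite_def M.sigma_finite_measure_axioms)
  define F where "F = {x \<in> space (PiM {..<m} (\<lambda>_. M)). T \<le> exp (\<Sum>i<m. f i (x i))}"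
  have sum_meas: "(\<lambda>x. \<Sum>i<m. f i (x i)) \<in> borel_measurable (PiM {..<m} (\<lambda>_. M))"
    using meas by (intro borel_measurable_sum measurable_compose[OF measurable_component_singleton]) auto
  then have F_sets: "F \<in> sets (PiM {..<m} (\<lambda>_. M))" unfolding F_def by measurable
  have "ennreal T * emeasure (PiM {..<m} (\<lambda>_. M)) F = (\<integral>\<^sup>+x. ennreal T * indicator F x \<partial>PiM {..<m} (\<lambda>_. M))"
    by (simp add: nn_integral_cmult_indicator F_sets)
  also have "\<dots> \<le> (\<integral>\<^sup>+x. (\<Prod>i<m. ennreal (exp (f i (x i)))) \<partial>PiM {..<m} (\<lambda>_. M))"
    by (intro nn_integral_mono) (auto simp: F_def indicator_def prod_ennreal exp_sum intro: ennreal_leI)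
  also have "\<dots> = (\<Prod>i<m. (\<integral>\<^sup>+x. ennreal (exp (f i x)) \<partial>M))"
    by (rule product_nn_integral_prod) (auto intro: measurable_compose[OF meas])
  also have "\<dots> \<le> (\<Prod>i<m. ennreal c)"
    by (rule prod_mono_ennreal) (rule bound, simp)
  finally have "ennreal (T * measure (PiM {..<m} (\<lambda>_. M)) F) \<le> ennreal (c ^ m)"
    using \<open>T > 0\<close> \<open>c \<ge> 0\<close> by (simp add: P.emeasure_eq_measure ennreal_mult ennreal_power)
  then have "T * measure (PiM {..<m} (\<lambda>_. M)) F \<le> c ^ m"
    using \<open>c \<ge> 0\<close> by (simp add: ennreal_le_iff)
  then show ?thesis
    using \<open>T > 0\<close> unfolding F_def by (simp add: pos_le_divide_eq mult.commute)
qed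

lemma sum_inverse_le_1_plus:
  assumes "real N \<le> exp x" "x \<ge> 0"
  shows "(\<Sum>j\<in>{1..N}. 1 / real j) \<le> 1 + x"
proof (cases "N = 0")
  case False
  have "(\<Sum>j\<in>{1..N}. 1 / real j) = harm N"
    by (simp add: harm_def divide_inverse)
  also have "harm N \<le> 1 + ln (real N)"
    using euler_mascheroni_sequence_decreasing[of 1 N] False by (simp add: harm_def)
  also have "ln (real N) \<le> ln (exp x)"
    using assms False by (intro ln_mono) auto
  finally show ?thesis by simp
qed (use assms in simp)

lemma eventually_le_power_of_neg_log_rate:
  fixes e :: "nat \<Rightarrow> real"
  assumes "\<delta> > 0" "q > 1" "\<And>m. e m \<ge> 0"
    and rate: "ereal (ln (1 / \<delta>)) \<le> liminf (\<lambda>m. neg_log_rate m (e m))"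
  shows "eventually (\<lambda>m. e m \<le> (\<delta> * q) ^ m) sequentially"
proof -
  have "ereal (ln (1 / \<delta>) - ln q) < ereal (ln (1 / \<delta>))" using \<open>q > 1\<close> by simp
  with rate have "eventually (\<lambda>m. ereal (ln (1 / \<delta>) - ln q) < neg_log_rate m (e m)) sequentially"
    by (simp add: le_Liminf_iff)
  with eventually_gt_at_top[of 0] show ?thesis
  proof eventually_elim
    case (elim m)
    show ?case
    proof (cases "e m = 0")
      case False
      then have "ln (1 / \<delta>) - ln q < - ln (e m) / real m"
        using elim by (simp add: neg_log_rate_def)
      then have "ln (e m) < real m * ln (\<delta> * q)"
        using elim \<open>\<delta> > 0\<close> \<open>q > 1\<close> by (simp add: field_simps ln_div ln_mult)
      also have "\<dots> = ln ((\<delta> * q) ^ m)"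
        using \<open>\<delta> > 0\<close> \<open>q > 1\<close> by (simp add: ln_realpow)
      finally show ?thesis
        using False \<open>e m \<ge> 0\<close> \<open>\<delta> > 0\<close> \<open>q > 1\<close> by simp
    qed (use \<open>\<delta> > 0\<close> \<open>q > 1\<close> in simp)
  qed
qed

text \<open>If \<open>p > \<delta>\<close>, write \<open>p = \<delta> q\<^sup>2\<close>: then \<open>q ^ (2m) \<le> q ^ m + 1 + m K\<close> for all large \<open>m\<close>, which
  exponential growth rules out.\<close>

lemma le_of_power_le_neg_log_rate:
  fixes e :: "nat \<Rightarrow> real"
  assumes "\<delta> > 0" "\<And>m. e m \<ge> 0"
    and power_le: "\<And>m. m \<ge> 1 \<Longrightarrow> p ^ m \<le> e m + \<delta> ^ m * (1 + real m * K)"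
    and rate: "ereal (ln (1 / \<delta>)) \<le> liminf (\<lambda>m. neg_log_rate m (e m))"
  shows "p \<le> \<delta>"
proof (rule ccontr)
  assume "\<not> p \<le> \<delta>"
  define q where "q = sqrt (p / \<delta>)"
  have "q > 1" using \<open>\<not> p \<le> \<delta>\<close> \<open>\<delta> > 0\<close> by (simp add: q_def)
  have p_eq: "p = \<delta> * q\<^sup>2" using \<open>\<not> p \<le> \<delta>\<close> \<open>\<delta> > 0\<close> by (simp add: q_def)
  have "eventually (\<lambda>m. e m \<le> (\<delta> * q) ^ m) sequentially"
    using eventually_le_power_of_neg_log_rate[OF \<open>\<delta> > 0\<close> \<open>q > 1\<close> assms(2) rate] .
  moreover have "eventually (\<lambda>m. 1 + real m * K < q ^ m) sequentially"
    using \<open>q > 1\<close> by real_asymp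
  moreover have "eventually (\<lambda>m. 2 \<le> q ^ m) sequentially"
    using \<open>q > 1\<close> by real_asymp
  ultimately have "eventually (\<lambda>m. False) sequentially"
    using eventually_gt_at_top[of 0]
  proof eventually_elim
    case (elim m)
    have "\<delta> ^ m * (q ^ m * q ^ m) \<le> \<delta> ^ m * (q ^ m + (1 + real m * K))"
      using power_le[of m] elim by (simp add: p_eq power_mult_distrib power2_eq_square algebra_simps)
    then have "q ^ m * q ^ m \<le> q ^ m + (1 + real m * K)"
      using \<open>\<delta> > 0\<close> by (simp add: mult_le_cancel_left_pos)
    moreover have "2 * q ^ m \<le> q ^ m * q ^ m"
      using elim by (intro mult_right_mono) auto
    ultimately show False using elim by linarith
  qed
  then show False by simp
qed

lemma measure_PiM_PiE_power:
  assumes "prob_space M" "B \<in> sets M"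
  shows "measure (PiM {..<m} (\<lambda>_. M)) (PiE {..<m} (\<lambda>_. B)) = measure M B ^ m"
proof -
  interpret M: prob_space M by fact
  interpret P: prob_space "PiM {..<m} (\<lambda>_. M)" by (rule prob_space_PiM) (rule assms(1))
  interpret product_sigma_finite "\<lambda>_::nat. M"
    by (simp add: product_sigma_finite_def M.sigma_finite_measure_axioms)
  have "ennreal (measure (PiM {..<m} (\<lambda>_. M)) (PiE {..<m} (\<lambda>_. B))) = (\<Prod>i<m. emeasure M B)"
    using \<open>B \<in> sets M\<close> by (simp add: P.emeasure_eq_measure[symmetric] emeasure_PiM)
  also have "\<dots> = ennreal (measure M B ^ m)"
    by (simp add: M.emeasure_eq_measure ennreal_power)
  finally show ?thesis by simp
qed

locale learning_setting =
  fixes \<mu> :: "'z measure" and MW :: "'w measure" and loss :: "'z \<Rightarrow> 'w \<Rightarrow> real"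
    and n :: nat and PSW :: "((nat \<Rightarrow> 'z) \<times> 'w) measure" and \<sigma> :: real
  assumes prob_space_\<mu>: "prob_space \<mu>" and n_ge_1: "n \<ge> 1"
    and prob_space_PSW: "prob_space PSW"
    and sets_PSW: "sets PSW = sets (PiM {..<n} (\<lambda>_. \<mu>) \<Otimes>\<^sub>M MW)"
    and distr_fst_PSW: "distr PSW (PiM {..<n} (\<lambda>_. \<mu>)) fst = PiM {..<n} (\<lambda>_. \<mu>)"
    and loss_measurable[measurable]: "(\<lambda>(z, w). loss z w) \<in> borel_measurable (\<mu> \<Otimes>\<^sub>M MW)"
    and \<sigma>_pos: "\<sigma> > 0"
    and subgaussian_loss: "\<And>w. w \<in> space MW \<Longrightarrow> subgaussian \<mu> (\<lambda>z. loss z w) \<sigma>"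
begin

sublocale PSW: prob_space PSW by (rule prob_space_PSW)

definition sq_tilt :: real where
  "sq_tilt = (2 * real n - 1) / (4 * \<sigma>\<^sup>2)"

definition gen_sq_threshold :: "((nat \<Rightarrow> 'z) \<times> 'w \<Rightarrow> real) \<Rightarrow> real \<Rightarrow> real \<Rightarrow> (nat \<Rightarrow> 'z) \<times> 'w \<Rightarrow> real" where
  "gen_sq_threshold R \<delta> \<epsilon> p = (R p + ln (sqrt (2 * real n) / \<delta>)) / sq_tilt + \<epsilon>"

definition excess_set :: "((nat \<Rightarrow> 'z) \<times> 'w \<Rightarrow> real) \<Rightarrow> real \<Rightarrow> real \<Rightarrow> ((nat \<Rightarrow> 'z) \<times> 'w) set" where
  "excess_set R \<delta> \<epsilon> = {p \<in> space PSW. gen_sq_threshold R \<delta> \<epsilon> p < (gen \<mu> n loss (fst p) (snd p))\<^sup>2}"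

text \<open>The event in the definition of \<open>compressible\<close>, with \<open>K\<close> in place of \<open>Rmax PSW R\<close>.\<close>

definition failure_event ::
    "((nat \<Rightarrow> 'z) \<times> 'w \<Rightarrow> real) \<Rightarrow> real \<Rightarrow> (nat \<Rightarrow> nat \<Rightarrow> nat \<Rightarrow> 'w) \<Rightarrow> real \<Rightarrow> nat \<Rightarrow>
     (nat \<Rightarrow> (nat \<Rightarrow> 'z) \<times> 'w) set" where
  "failure_event R \<epsilon> book K m = {x \<in> space (PiM {..<m} (\<lambda>_. PSW)).
     \<forall>j \<in> {1..nat \<lfloor>exp (real m * K)\<rfloor>}. real j \<le> exp (\<Sum>i<m. R (x i)) \<longrightarrow>
       distortion_m \<mu> n loss m (\<lambda>i. snd (x i)) (book m j) (\<lambda>i. fst (x i)) > \<epsilon>}"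

definition codeword_event :: "real \<Rightarrow> (nat \<Rightarrow> nat \<Rightarrow> nat \<Rightarrow> 'w) \<Rightarrow> nat \<Rightarrow> nat \<Rightarrow> (nat \<Rightarrow> (nat \<Rightarrow> 'z) \<times> 'w) set" where
  "codeword_event \<delta> book m j = {x \<in> space (PiM {..<m} (\<lambda>_. PSW)).
     real j * (sqrt (2 * real n) / \<delta>) ^ m \<le> exp (\<Sum>i<m. sq_tilt * (gen \<mu> n loss (fst (x i)) (book m j i))\<^sup>2)}"

lemma sq_tilt_pos: "sq_tilt > 0"
  using n_ge_1 \<sigma>_pos by (simp add: sq_tilt_def)

lemma measurable_gen_fixed:
  assumes "w \<in> space MW"
  shows "(\<lambda>p. gen \<mu> n loss (fst p) w) \<in> borel_measurable PSW"
proof -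
  have [measurable]: "(\<lambda>z. loss z w) \<in> borel_measurable \<mu>"
    using measurable_Pair1[OF loss_measurable assms] by simp
  have "(\<lambda>s. gen \<mu> n loss s w) \<in> borel_measurable (PiM {..<n} (\<lambda>_. \<mu>))"
    unfolding gen_def emp_risk_def by measurable
  moreover have "fst \<in> measurable PSW (PiM {..<n} (\<lambda>_. \<mu>))"
    using measurable_fst by (subst measurable_cong_sets[OF sets_PSW refl])
  ultimately show ?thesis by (rule measurable_compose[rotated])
qed

lemma measurable_gen[measurable]: "(\<lambda>p. gen \<mu> n loss (fst p) (snd p)) \<in> borel_measurable PSW"
proof -
  interpret prob_space \<mu> by (rule prob_space_\<mu>)
  have "(\<lambda>(w, z). loss z w) \<in> borel_measurable (MW \<Otimes>\<^sub>M \<mu>)"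
    by (subst measurable_pair_swap_iff) (simp add: case_prod_beta')
  from borel_measurable_lebesgue_integral[OF this]
  have [measurable]: "(\<lambda>w. pop_risk \<mu> loss w) \<in> borel_measurable MW"
    unfolding pop_risk_def by simp
  have "(\<lambda>p. loss (fst p k) (snd p)) \<in> borel_measurable (PiM {..<n} (\<lambda>_. \<mu>) \<Otimes>\<^sub>M MW)" if "k < n" for k
  proof -
    have "(\<lambda>p. (fst p k, snd p)) \<in> measurable (PiM {..<n} (\<lambda>_. \<mu>) \<Otimes>\<^sub>M MW) (\<mu> \<Otimes>\<^sub>M MW)"
      using that by (intro measurable_Pair measurable_compose[OF measurable_fst measurable_component_singleton]
          measurable_snd) auto
    from measurable_compose[OF this loss_measurable] show ?thesis by simp
  qed
  then have "(\<lambda>p. gen \<mu> n loss (fst p) (snd p)) \<in> borel_measurable (PiM {..<n} (\<lambda>_. \<mu>) \<Otimes>\<^sub>M MW)"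
    unfolding gen_def emp_risk_def
    by (intro borel_measurable_diff borel_measurable_divide borel_measurable_sum) auto
  then show ?thesis by (subst measurable_cong_sets[OF sets_PSW refl])
qed

lemma nn_integral_exp_gen_sq_le_PSW:
  assumes w: "w \<in> space MW"
  shows "(\<integral>\<^sup>+p. ennreal (exp (sq_tilt * (gen \<mu> n loss (fst p) w)\<^sup>2)) \<partial>PSW) \<le> ennreal (sqrt (2 * real n))"
proof -
  have [measurable]: "(\<lambda>z. loss z w) \<in> borel_measurable \<mu>"
    using measurable_Pair1[OF loss_measurable w] by simp
  have fst_meas: "fst \<in> measurable PSW (PiM {..<n} (\<lambda>_. \<mu>))"
    using measurable_fst by (subst measurable_cong_sets[OF sets_PSW refl])
  have "(\<integral>\<^sup>+p. ennreal (exp (sq_tilt * (gen \<mu> n loss (fst p) w)\<^sup>2)) \<partial>PSW)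
      = (\<integral>\<^sup>+s. ennreal (exp (sq_tilt * (gen \<mu> n loss s w)\<^sup>2)) \<partial>distr PSW (PiM {..<n} (\<lambda>_. \<mu>)) fst)"
    by (rule nn_integral_distr[OF fst_meas, symmetric])
       (unfold gen_def emp_risk_def, measurable)
  also have "\<dots> \<le> ennreal (sqrt (2 * real n))"
    unfolding distr_fst_PSW sq_tilt_def
    by (rule nn_integral_exp_gen_sq_le[of \<mu> n \<sigma> loss w, OF prob_space_\<mu> n_ge_1 \<sigma>_pos _ subgaussian_loss[OF w]]) measurable
  finally show ?thesis .
qed

lemma measure_sum_gen_sq_ge_le:
  assumes "T > 0" and ws: "\<And>i. i < m \<Longrightarrow> ws i \<in> space MW"
  shows "measure (PiM {..<m} (\<lambda>_. PSW)) {x \<in> space (PiM {..<m} (\<lambda>_. PSW)).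
            T \<le> exp (\<Sum>i<m. sq_tilt * (gen \<mu> n loss (fst (x i)) (ws i))\<^sup>2)}
         \<le> sqrt (2 * real n) ^ m / T"
  using prob_space_PSW \<open>T > 0\<close>
  by (rule measure_PiM_exp_sum_ge_le)
     (use ws measurable_gen_fixed nn_integral_exp_gen_sq_le_PSW in auto)

lemma excess_set_sets:
  assumes [measurable]: "R \<in> borel_measurable PSW"
  shows "excess_set R \<delta> \<epsilon> \<in> sets PSW"
  unfolding excess_set_def gen_sq_threshold_def by measurable

lemma failure_event_sets:
  assumes [measurable]: "R \<in> borel_measurable PSW"
    and book: "\<And>j i. j \<in> {1..nat \<lfloor>exp (real m * K)\<rfloor>} \<Longrightarrow> i < m \<Longrightarrow> book m j i \<in> space MW"
  shows "failure_event R \<epsilon> book K m \<in> sets (PiM {..<m} (\<lambda>_. PSW))"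
proof -
  have [measurable]: "(\<lambda>x. x i) \<in> measurable (PiM {..<m} (\<lambda>_. PSW)) PSW" if "i < m" for i
    using that by (intro measurable_component_singleton) auto
  have [measurable]: "(\<lambda>x. \<Sum>i<m. R (x i)) \<in> borel_measurable (PiM {..<m} (\<lambda>_. PSW))"
    by (intro borel_measurable_sum measurable_compose[OF measurable_component_singleton]) auto
  have [measurable]: "(\<lambda>x. distortion_m \<mu> n loss m (\<lambda>i. snd (x i)) (book m j) (\<lambda>i. fst (x i)))
      \<in> borel_measurable (PiM {..<m} (\<lambda>_. PSW))" if "j \<in> {1..nat \<lfloor>exp (real m * K)\<rfloor>}" for j
    unfolding distortion_m_def distortion_def
    using measurable_gen_fixed[OF book[OF that]]
    by (intro borel_measurable_divide borel_measurable_const borel_measurable_sum borel_measurable_diff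
        borel_measurable_power measurable_compose[OF measurable_component_singleton]) auto
  show ?thesis unfolding failure_event_def
    by (intro predE pred_intros_finite pred_intros_logic) measurable
qed

lemma PiE_excess_set_subset:
  assumes "\<delta> > 0" "m \<ge> 1"
  shows "PiE {..<m} (\<lambda>_. excess_set R \<delta> \<epsilon>)
           \<subseteq> failure_event R \<epsilon> book K m \<union> (\<Union>j\<in>{1..nat \<lfloor>exp (real m * K)\<rfloor>}. codeword_event \<delta> book m j)"
    (is "_ \<subseteq> _ \<union> (\<Union>j\<in>?J. _)")
proof
  fix x assume x: "x \<in> PiE {..<m} (\<lambda>_. excess_set R \<delta> \<epsilon>)"
  then have x_space: "x \<in> space (PiM {..<m} (\<lambda>_. PSW))"
    by (auto simp: space_PiM PiE_iff excess_set_def)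
  show "x \<in> failure_event R \<epsilon> book K m \<union> (\<Union>j\<in>?J. codeword_event \<delta> book m j)"
  proof (cases "x \<in> failure_event R \<epsilon> book K m")
    case False
    then obtain j where j: "j \<in> ?J" and j_le: "real j \<le> exp (\<Sum>i<m. R (x i))"
      and dist: "\<not> \<epsilon> < distortion_m \<mu> n loss m (\<lambda>i. snd (x i)) (book m j) (\<lambda>i. fst (x i))"
      using x_space unfolding failure_event_def by auto
    define a where "a = ln (sqrt (2 * real n) / \<delta>)"
    define g where "g i = gen \<mu> n loss (fst (x i)) (snd (x i))" for i
    define h where "h i = gen \<mu> n loss (fst (x i)) (book m j i)" for i
    have "(\<Sum>i<m. (g i)\<^sup>2 - (h i)\<^sup>2) / real m \<le> \<epsilon>"
      using dist unfolding distortion_m_def distortion_def g_def h_def by simp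
    then have dist_sum: "(\<Sum>i<m. (g i)\<^sup>2) \<le> (\<Sum>i<m. (h i)\<^sup>2) + real m * \<epsilon>"
      using \<open>m \<ge> 1\<close> by (simp add: pos_divide_le_eq sum_subtractf mult.commute)
    have "(\<Sum>i<m. gen_sq_threshold R \<delta> \<epsilon> (x i)) \<le> (\<Sum>i<m. (g i)\<^sup>2)"
      using x by (intro sum_mono) (auto simp: PiE_iff excess_set_def g_def less_imp_le)
    moreover have "(\<Sum>i<m. gen_sq_threshold R \<delta> \<epsilon> (x i)) = ((\<Sum>i<m. R (x i)) + real m * a) / sq_tilt + real m * \<epsilon>"
      by (simp add: gen_sq_threshold_def a_def sum.distrib add_divide_distrib sum_divide_distrib)
    ultimately have "((\<Sum>i<m. R (x i)) + real m * a) / sq_tilt \<le> (\<Sum>i<m. (h i)\<^sup>2)"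
      using dist_sum by linarith
    then have exponent_le: "(\<Sum>i<m. R (x i)) + real m * a \<le> (\<Sum>i<m. sq_tilt * (h i)\<^sup>2)"
      using sq_tilt_pos by (simp add: pos_divide_le_eq sum_distrib_left[symmetric] mult.commute)
    have "real j * (sqrt (2 * real n) / \<delta>) ^ m = real j * exp a ^ m"
      using \<open>\<delta> > 0\<close> n_ge_1 by (simp add: a_def)
    also have "\<dots> \<le> exp (\<Sum>i<m. R (x i)) * exp a ^ m"
      using j_le by (intro mult_right_mono) auto
    also have "\<dots> = exp ((\<Sum>i<m. R (x i)) + real m * a)"
      by (simp add: exp_add exp_of_nat_mult)
    also have "\<dots> \<le> exp (\<Sum>i<m. sq_tilt * (h i)\<^sup>2)"
      using exponent_le by simp
    finally have "x \<in> codeword_event \<delta> book m j" using x_space unfolding codeword_event_def h_def by simp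
    then show ?thesis using j by blast
  qed simp
qed

lemma codeword_event_sets:
  assumes "\<And>i. i < m \<Longrightarrow> book m j i \<in> space MW"
  shows "codeword_event \<delta> book m j \<in> sets (PiM {..<m} (\<lambda>_. PSW))"
proof -
  have "(\<lambda>x. \<Sum>i<m. sq_tilt * (gen \<mu> n loss (fst (x i)) (book m j i))\<^sup>2) \<in> borel_measurable (PiM {..<m} (\<lambda>_. PSW))"
    using measurable_gen_fixed[OF assms]
    by (intro borel_measurable_sum borel_measurable_times borel_measurable_const borel_measurable_power
        measurable_compose[OF measurable_component_singleton]) auto
  then show ?thesis unfolding codeword_event_def by measurable
qed

lemma measure_codeword_event_le:
  assumes "\<delta> > 0" "j \<ge> 1" "\<And>i. i < m \<Longrightarrow> book m j i \<in> space MW"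
  shows "measure (PiM {..<m} (\<lambda>_. PSW)) (codeword_event \<delta> book m j) \<le> \<delta> ^ m * (1 / real j)"
proof -
  have "measure (PiM {..<m} (\<lambda>_. PSW)) (codeword_event \<delta> book m j)
      \<le> sqrt (2 * real n) ^ m / (real j * (sqrt (2 * real n) / \<delta>) ^ m)"
    unfolding codeword_event_def using assms n_ge_1 by (intro measure_sum_gen_sq_ge_le) auto
  also have "\<dots> = \<delta> ^ m * (1 / real j)"
    using assms n_ge_1 by (simp add: power_divide field_simps)
  finally show ?thesis .
qed

lemma measure_excess_set_power_le:
  assumes [measurable]: "R \<in> borel_measurable PSW" and "K \<ge> 0" "\<delta> > 0" "m \<ge> 1"
    and book: "\<And>j i. j \<in> {1..nat \<lfloor>exp (real m * K)\<rfloor>} \<Longrightarrow> i < m \<Longrightarrow> book m j i \<in> space MW"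
  shows "measure PSW (excess_set R \<delta> \<epsilon>) ^ m
           \<le> measure (PiM {..<m} (\<lambda>_. PSW)) (failure_event R \<epsilon> book K m) + \<delta> ^ m * (1 + real m * K)"
proof -
  define P where "P = PiM {..<m} (\<lambda>_. PSW)"
  interpret P: prob_space P unfolding P_def by (rule prob_space_PiM) (rule prob_space_PSW)
  define J where "J = {1..nat \<lfloor>exp (real m * K)\<rfloor>}"
  define E where "E = failure_event R \<epsilon> book K m"
  have E_sets: "E \<in> sets P"
    unfolding E_def P_def using book by (rule failure_event_sets[OF assms(1)])
  have F_sets: "codeword_event \<delta> book m j \<in> sets P" if "j \<in> J" for j
    unfolding P_def using book that unfolding J_def by (intro codeword_event_sets) auto
  have "measure PSW (excess_set R \<delta> \<epsilon>) ^ m = measure P (PiE {..<m} (\<lambda>_. excess_set R \<delta> \<epsilon>))"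
    unfolding P_def using prob_space_PSW excess_set_sets[OF assms(1)] by (rule measure_PiM_PiE_power[symmetric])
  also have "\<dots> \<le> measure P (E \<union> (\<Union>j\<in>J. codeword_event \<delta> book m j))"
    using PiE_excess_set_subset[OF \<open>\<delta> > 0\<close> \<open>m \<ge> 1\<close>, of R \<epsilon> book K] E_sets F_sets
    unfolding E_def J_def by (intro P.finite_measure_mono) (auto simp: P_def)
  also have "\<dots> \<le> measure P E + measure P (\<Union>j\<in>J. codeword_event \<delta> book m j)"
    using E_sets F_sets by (intro measure_Un_le) auto
  also have "measure P (\<Union>j\<in>J. codeword_event \<delta> book m j) \<le> (\<Sum>j\<in>J. measure P (codeword_event \<delta> book m j))"
    using F_sets unfolding J_def by (intro measure_UNION_le) auto
  also have "\<dots> \<le> \<delta> ^ m * (\<Sum>j\<in>J. 1 / real j)"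
    unfolding sum_distrib_left P_def J_def using \<open>\<delta> > 0\<close> book
    by (intro sum_mono measure_codeword_event_le) auto
  also have "(\<Sum>j\<in>J. 1 / real j) \<le> 1 + real m * K"
    using \<open>K \<ge> 0\<close> unfolding J_def by (intro sum_inverse_le_1_plus) auto
  finally show ?thesis
    using \<open>\<delta> > 0\<close> unfolding E_def P_def by (simp add: mult_left_mono)
qed

lemma measure_excess_set_le:
  assumes "R \<in> borel_measurable PSW" "K \<ge> 0" "\<delta> > 0"
    and "\<And>m j i. j \<in> {1..nat \<lfloor>exp (real m * K)\<rfloor>} \<Longrightarrow> i < m \<Longrightarrow> book m j i \<in> space MW"
    and "ereal (ln (1 / \<delta>)) \<le> liminf (\<lambda>m. neg_log_rate m (measure (PiM {..<m} (\<lambda>_. PSW)) (failure_event R \<epsilon> book K m)))"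
  shows "measure PSW (excess_set R \<delta> \<epsilon>) \<le> \<delta>"
  using \<open>\<delta> > 0\<close> measure_nonneg measure_excess_set_power_le[OF assms(1-3) _ assms(4)] assms(5)
  by (rule le_of_power_le_neg_log_rate)

lemma Rmax_nonneg:
  assumes "\<And>x. x \<in> space PSW \<Longrightarrow> R x \<ge> 0" "bdd_above (R ` space PSW)"
  shows "Rmax PSW R \<ge> 0"
proof -
  obtain p where p: "p \<in> space PSW" using PSW.not_empty by blast
  show ?thesis
    unfolding Rmax_def by (rule cSUP_upper2[OF assms(2) p assms(1)[OF p]])
qed

lemma measure_excess_set_le_of_compressible:
  assumes "R \<in> borel_measurable PSW" "\<And>x. x \<in> space PSW \<Longrightarrow> R x \<ge> 0" "bdd_above (R ` space PSW)"
    and "\<delta> > 0" "What \<subseteq> space MW" "compressible \<mu> n loss PSW What R \<epsilon> \<delta>"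
  shows "measure PSW (excess_set R \<delta> \<epsilon>) \<le> \<delta>"
proof -
  from \<open>compressible \<mu> n loss PSW What R \<epsilon> \<delta>\<close> obtain book where
    book: "\<forall>m j i. 1 \<le> j \<and> j \<le> nat \<lfloor>exp (real m * Rmax PSW R)\<rfloor> \<and> i < m \<longrightarrow> book m j i \<in> What"
    and rate: "ereal (ln (1 / \<delta>)) \<le> liminf (\<lambda>m. neg_log_rate m
        (measure (PiM {..<m} (\<lambda>_. PSW)) {x \<in> space (PiM {..<m} (\<lambda>_. PSW)).
           \<forall>j \<in> {1..nat \<lfloor>exp (real m * Rmax PSW R)\<rfloor>}. real j \<le> exp (\<Sum>i<m. R (x i)) \<longrightarrow>
             distortion_m \<mu> n loss m (\<lambda>i. snd (x i)) (book m j) (\<lambda>i. fst (x i)) > \<epsilon>}))"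
    unfolding compressible_def by blast
  show ?thesis
    using \<open>R \<in> borel_measurable PSW\<close> Rmax_nonneg[OF assms(2,3)] \<open>\<delta> > 0\<close>
  proof (rule measure_excess_set_le)
    show "book m j i \<in> space MW" if "j \<in> {1..nat \<lfloor>exp (real m * Rmax PSW R)\<rfloor>}" "i < m" for m j i
      using book \<open>What \<subseteq> space MW\<close> that by auto
    show "ereal (ln (1 / \<delta>)) \<le> liminf (\<lambda>m. neg_log_rate m
        (measure (PiM {..<m} (\<lambda>_. PSW)) (failure_event R \<epsilon> book (Rmax PSW R) m)))"
      using rate by (simp add: failure_event_def)
  qed
qed

lemma measure_gen_le_sqrt_threshold_ge:
  assumes [measurable]: "R \<in> borel_measurable PSW"
  shows "measure PSW {p \<in> space PSW. gen \<mu> n loss (fst p) (snd p) \<le> sqrt (gen_sq_threshold R \<delta> \<epsilon> p)}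
           \<ge> 1 - measure PSW (excess_set R \<delta> \<epsilon>)"
proof -
  have "space PSW - excess_set R \<delta> \<epsilon>
      \<subseteq> {p \<in> space PSW. gen \<mu> n loss (fst p) (snd p) \<le> sqrt (gen_sq_threshold R \<delta> \<epsilon> p)}"
    by (auto simp: excess_set_def not_less intro!: real_le_rsqrt)
  then have "measure PSW (space PSW - excess_set R \<delta> \<epsilon>)
      \<le> measure PSW {p \<in> space PSW. gen \<mu> n loss (fst p) (snd p) \<le> sqrt (gen_sq_threshold R \<delta> \<epsilon> p)}"
    by (intro PSW.finite_measure_mono) (unfold gen_sq_threshold_def, measurable)
  then show ?thesis
    using PSW.prob_compl[OF excess_set_sets[OF assms]] by simp
qed

end

theorem theorem1:
  fixes \<mu> :: "'z measure" and MW :: "'w measure" and loss :: "'z \<Rightarrow> 'w \<Rightarrow> real"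
    and n :: nat and PSW :: "((nat \<Rightarrow> 'z) \<times> 'w) measure" and What :: "'w set"
    and R :: "(nat \<Rightarrow> 'z) \<times> 'w \<Rightarrow> real" and \<delta> \<epsilon> \<sigma> :: real
  assumes "prob_space \<mu>" and "n \<ge> 1"
    and "prob_space PSW"
    and "sets PSW = sets (PiM {..<n} (\<lambda>_. \<mu>) \<Otimes>\<^sub>M MW)"
    and "distr PSW (PiM {..<n} (\<lambda>_. \<mu>)) fst = PiM {..<n} (\<lambda>_. \<mu>)"
    and "What \<subseteq> space MW"
    and "(\<lambda>(z, w). loss z w) \<in> borel_measurable (\<mu> \<Otimes>\<^sub>M MW)"
    and "\<forall>z\<in>space \<mu>. \<forall>w\<in>space MW. loss z w \<ge> 0"
    and "R \<in> borel_measurable PSW"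
    and "\<forall>x\<in>space PSW. R x \<ge> 0"
    and "bdd_above (R ` space PSW)"
    and "0 < \<delta>" and "\<delta> < 1" and "\<sigma> > 0"
    and "compressible \<mu> n loss PSW What R \<epsilon> \<delta>"
    and "\<forall>w\<in>space MW. subgaussian \<mu> (\<lambda>z. loss z w) \<sigma>"
  shows "measure PSW {(s, w) \<in> space PSW.
            gen \<mu> n loss s w \<le> sqrt (4 * \<sigma>\<^sup>2 * (R (s, w) + ln (sqrt (2 * real n) / \<delta>)) / (2 * real n - 1) + \<epsilon>)}
         \<ge> 1 - \<delta>"
proof -
  interpret learning_setting \<mu> MW loss n PSW \<sigma>
    using assms(1-5,7,14) assms(16)[rule_format] by (rule learning_setting.intro)
  have "measure PSW (excess_set R \<delta> \<epsilon>) \<le> \<delta>"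
    using assms(9) assms(10)[rule_format] assms(11,12,6,15) by (rule measure_excess_set_le_of_compressible)
  moreover have "gen_sq_threshold R \<delta> \<epsilon> p
      = 4 * \<sigma>\<^sup>2 * (R p + ln (sqrt (2 * real n) / \<delta>)) / (2 * real n - 1) + \<epsilon>" for p
    by (simp add: gen_sq_threshold_def sq_tilt_def)
  ultimately show ?thesis
    using measure_gen_le_sqrt_threshold_ge[OF assms(9), of \<delta> \<epsilon>] by (simp add: case_prod_beta')
qed

end
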